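(* Let $A\in\mathbb{R}^{n\times n}$ be Metzler, $J\in\mathbb{R}^{n\times n}$ nonnegative, $\bar T>0$, $d_h\in\mathbb{N}$, $\varepsilon>0$ and $\epsilon>0$. Assume there exist a polynomial vector $\zeta:\mathbb{R}\to\mathbb{R}^n$ of degree at most $d_h$ and vectors $\theta_{ij}\in\mathbb{R}^n$, for integers $i,j\ge0$ with $i+j\le d_h$, such that: (i) $\theta_{ij}\ge0$ for all such $i,j$; (ii) $\zeta(0)-\epsilon\mathbf{1}_n\ge0$; (iii) every component of the polynomial vector $-A^\top\zeta(\tau)+\dot\zeta(\tau)-\sum_{i+j\le d_h}\theta_{ij}\tau^i(\bar T-\tau)^j$, written in the monomial basis $1,\tau,\tau^2,\dots$, has only nonnegative coefficients; (iv) $-\zeta(\bar T)^\top J+\zeta(0)^\top-\varepsilon\mathbf{1}_n^\top\ge0$. Then $\zeta(\tau)^\top A-\dot\zeta(\tau)^\top\le0$ for all $\tau\in[0,\bar T]$, $\zeta(\bar T)^\top J-\zeta(0)^\top+\varepsilon\mathbf{1}_n^\top\le0$, and the impulsive system $\dot x=Ax$ ($t\ne t_k$), $x(t_k^+)=Jx(t_k)$ is asymptotically stable under constant dwell-time $\bar T$.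
   Context: A matrix is Metzler if its off-diagonal entries are nonnegative and nonnegative if all entries are. Vector inequalities are componentwise; $\mathbf{1}_n$ is the vector of ones. In the impulsive system $x(t^+)=\lim_{s\downarrow t}x(s)$, impulse times are strictly increasing, and constant dwell-time $\bar T$ means $t_{k+1}-t_k=\bar T$ for all $k$; asymptotic stability means global asymptotic stability of the zero solution. *)

theory Defs
  imports "HOL-Analysis.Analysis" "HOL-Computational_Algebra.Polynomial"
begin

definition metzler :: "real^'n^'n \<Rightarrow> bool" where
  "metzler A \<longleftrightarrow> (\<forall>i j. i \<noteq> j \<longrightarrow> A $ i $ j \<ge> 0)"

definition nonneg_mat :: "real^'n^'n \<Rightarrow> bool" where
  "nonneg_mat J \<longleftrightarrow> (\<forall>i j. J $ i $ j \<ge> 0)"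

definition pvec_eval :: "real poly ^ 'n \<Rightarrow> real \<Rightarrow> real ^ 'n" where
  "pvec_eval z t = (\<chi> i. poly (z $ i) t)"

definition pvec_deriv :: "real poly ^ 'n \<Rightarrow> real poly ^ 'n" where
  "pvec_deriv z = (\<chi> i. pderiv (z $ i))"

definition cond_poly ::
  "real^'n^'n \<Rightarrow> real poly ^ 'n \<Rightarrow> (nat \<Rightarrow> nat \<Rightarrow> real^'n) \<Rightarrow> nat \<Rightarrow> real \<Rightarrow> real poly ^ 'n" where
  "cond_poly A z theta d T = (\<chi> k.
      - (\<Sum>l\<in>UNIV. smult (A $ l $ k) (z $ l)) + pderiv (z $ k)
      - (\<Sum>(i,j)\<in>{(i,j). i + j \<le> d}. smult (theta i j $ k) ([:0, 1:] ^ i * [:T, -1:] ^ j)))"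

text \<open>The solution lives on [t_0, inf), is left-continuous at impulse times
  (x(t_k) is the pre-jump value) and its right limit at t_k is J x(t_k).\<close>
definition impulsive_solution ::
  "real^'n^'n \<Rightarrow> real^'n^'n \<Rightarrow> real \<Rightarrow> (nat \<Rightarrow> real) \<Rightarrow> (real \<Rightarrow> real^'n) \<Rightarrow> bool" where
  "impulsive_solution A J Tbar tk x \<longleftrightarrow>
     (\<forall>k. tk (Suc k) - tk k = Tbar) \<and>
     (\<forall>k. continuous_on {tk k<..tk (Suc k)} x) \<and>
     (\<forall>k. \<forall>s\<in>{tk k<..<tk (Suc k)}. (x has_vector_derivative (A *v x s)) (at s)) \<and>
     (\<forall>k. (x \<longlongrightarrow> J *v x (tk k)) (at_right (tk k)))"

definition GAS_const_dwell :: "real^'n^'n \<Rightarrow> real^'n^'n \<Rightarrow> real \<Rightarrow> bool" where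
  "GAS_const_dwell A J Tbar \<longleftrightarrow>
     (\<forall>e>0. \<exists>\<delta>>0. \<forall>tk x. impulsive_solution A J Tbar tk x \<longrightarrow> norm (x (tk 0)) < \<delta> \<longrightarrow>
        (\<forall>s\<ge>tk 0. norm (x s) < e)) \<and>
     (\<forall>tk x. impulsive_solution A J Tbar tk x \<longrightarrow> (x \<longlongrightarrow> 0) at_top)"

end

theory Submission
  imports Defs
begin

text \<open>The certificate \<open>\<zeta>\<close> gives the copositive Lyapunov function
  \<open>V(t, x) = \<zeta>(T - (t - t\<^sub>k))\<^sup>T \<bar>x\<bar>\<close> on each dwell interval \<open>(t\<^sub>k, t\<^sub>k\<^sub>+\<^sub>1]\<close>. Nonnegative
  coefficients make the certificate polynomial nonnegative for \<open>\<tau> \<ge> 0\<close>, and the \<open>\<theta>\<close>-terms are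
  nonnegative on \<open>[0, T]\<close>, so \<open>\<zeta>\<^sup>T A \<le> \<zeta>'\<^sup>T\<close> there. For Metzler \<open>A\<close> this inequality keeps
  \<open>\<zeta>\<close> uniformly positive on \<open>[0, T]\<close> and makes \<open>V\<close> nonincreasing along \<open>x' = A x\<close>. The
  jump inequality yields \<open>\<zeta>(T)\<^sup>T J \<le> q \<zeta>(0)\<^sup>T\<close> with \<open>q < 1\<close>, so \<open>V\<close> contracts by \<open>q\<close>
  across every impulse; as \<open>V\<close> is comparable to \<open>\<parallel>x\<parallel>\<close>, the state decays geometrically.\<close>

lemma inner_abs_cart: "(w::real^'n) \<bullet> \<bar>y\<bar> = (\<Sum>i\<in>UNIV. w$i * \<bar>y$i\<bar>)"
  by (simp add: inner_vec_def abs_vec_def)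

lemma component_continuous_on_if_has_real_derivative:
  assumes "\<And>t. ((\<lambda>t. z t $ i) has_real_derivative z' t $ i) (at t)"
  shows "continuous_on S (\<lambda>t. z t $ i)"
  by (rule DERIV_continuous_on, rule has_field_derivative_at_within, rule assms)

lemma poly_nonneg_if_coeffs_nonneg:
  fixes p :: "real poly"
  assumes "\<And>m. coeff p m \<ge> 0" and "t \<ge> 0"
  shows "poly p t \<ge> 0"
  unfolding poly_altdef using assms by (intro sum_nonneg) auto

lemma poly_cond_poly:
  "poly (cond_poly A z theta d T $ k) t =
     pvec_eval (pvec_deriv z) t $ k - (pvec_eval z t v* A) $ k
     - (\<Sum>(i,j)\<in>{(i,j). i + j \<le> d}. theta i j $ k * (t ^ i * (T - t) ^ j))"
  by (simp add: cond_poly_def pvec_eval_def pvec_deriv_def vector_matrix_mult_def poly_sum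
      case_prod_beta mult.commute)

lemma cond_poly_coeffs_nonneg_imp_decrease:
  assumes theta: "\<forall>i j. i + j \<le> d \<longrightarrow> theta i j \<ge> 0"
    and coeffs: "\<forall>k m. coeff (cond_poly A z theta d T $ k) m \<ge> 0"
    and t: "t \<in> {0..T}"
  shows "pvec_eval z t v* A - pvec_eval (pvec_deriv z) t \<le> 0"
proof -
  have "(pvec_eval z t v* A) $ k \<le> pvec_eval (pvec_deriv z) t $ k" for k
  proof -
    have "0 \<le> theta i j $ k * (t ^ i * (T - t) ^ j)" if "i + j \<le> d" for i j
      using theta that t by (intro mult_nonneg_nonneg zero_le_power) (auto simp: less_eq_vec_def)
    then have "0 \<le> (\<Sum>(i,j)\<in>{(i,j). i + j \<le> d}. theta i j $ k * (t ^ i * (T - t) ^ j))"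
      by (intro sum_nonneg) (auto split: prod.splits)
    moreover have "0 \<le> poly (cond_poly A z theta d T $ k) t"
      using coeffs t by (intro poly_nonneg_if_coeffs_nonneg) auto
    ultimately show ?thesis by (simp add: poly_cond_poly)
  qed
  then show ?thesis by (simp add: less_eq_vec_def)
qed

lemma pvec_eval_component_has_real_derivative:
  "((\<lambda>t. pvec_eval z t $ i) has_real_derivative pvec_eval (pvec_deriv z) t $ i) (at t)"
  by (simp add: pvec_eval_def pvec_deriv_def poly_DERIV)

lemma metzler_vector_matrix_mult_ge:
  fixes A :: "real^'n^'n"
  assumes "metzler A" and "z \<ge> 0" and "\<And>i. - \<mu> \<le> A$i$i"
  shows "(z v* A) $ j \<ge> - \<mu> * z $ j"
proof -
  have "(z v* A) $ j = z$j * A$j$j + (\<Sum>i\<in>UNIV - {j}. z$i * A$i$j)"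
    by (simp add: vector_matrix_mult_def sum.remove)
  moreover have "(\<Sum>i\<in>UNIV - {j}. z$i * A$i$j) \<ge> 0"
    using assms(1,2) by (intro sum_nonneg) (auto simp: metzler_def less_eq_vec_def)
  moreover have "z$j * A$j$j \<ge> z$j * (- \<mu>)"
    using assms(2,3) by (intro mult_left_mono) (auto simp: less_eq_vec_def)
  ultimately show ?thesis by (simp add: mult.commute[of "z$j"])
qed

lemma exp_weighted_component_mono:
  fixes A :: "real^'n^'n" and z z' :: "real \<Rightarrow> real^'n"
  assumes "metzler A" and diag: "\<And>i. - \<mu> \<le> A$i$i"
    and z': "\<And>t i. ((\<lambda>t. z t $ i) has_real_derivative z' t $ i) (at t)"
    and decrease: "\<And>t. t \<in> {a<..<b} \<Longrightarrow> z t v* A \<le> z' t"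
    and nonneg: "\<And>t. t \<in> {a<..<b} \<Longrightarrow> z t \<ge> 0"
    and "a \<le> b"
  shows "exp (\<mu> * a) * z a $ i \<le> exp (\<mu> * b) * z b $ i"
proof (rule DERIV_nonneg_imp_increasing_open[OF \<open>a \<le> b\<close>])
  show "continuous_on {a..b} (\<lambda>t. exp (\<mu> * t) * z t $ i)"
    by (rule continuous_on_mult[OF _ component_continuous_on_if_has_real_derivative[OF z']])
      (intro continuous_intros)
  fix t assume "a < t" "t < b"
  then have t: "t \<in> {a<..<b}" by simp
  have "0 \<le> \<mu> * z t $ i + (z t v* A) $ i"
    using metzler_vector_matrix_mult_ge[OF assms(1) nonneg[OF t] diag, of i] by linarith
  also have "\<dots> \<le> \<mu> * z t $ i + z' t $ i"
    using decrease[OF t] by (simp add: less_eq_vec_def)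
  finally have "0 \<le> exp (\<mu> * t) * (\<mu> * z t $ i + z' t $ i)" by simp
  moreover have "((\<lambda>t. exp (\<mu> * t) * z t $ i) has_real_derivative
      exp (\<mu> * t) * (\<mu> * z t $ i + z' t $ i)) (at t)"
    by (auto intro!: derivative_eq_intros z' simp: algebra_simps)
  ultimately show "\<exists>y. ((\<lambda>t. exp (\<mu> * t) * z t $ i) has_real_derivative y) (at t) \<and> 0 \<le> y"
    by blast
qed

text \<open>Up to the first zero of a component, \<open>exp (\<mu> t) z\<^sub>i(t)\<close> is nondecreasing, so there is none.\<close>
lemma decrease_imp_components_pos:
  fixes A :: "real^'n^'n" and z z' :: "real \<Rightarrow> real^'n"
  assumes "metzler A" and diag: "\<And>i. - \<mu> \<le> A$i$i"
    and z': "\<And>t i. ((\<lambda>t. z t $ i) has_real_derivative z' t $ i) (at t)"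
    and decrease: "\<And>t. t \<in> {0..T} \<Longrightarrow> z t v* A \<le> z' t"
    and init: "\<And>i. z 0 $ i > 0"
    and t: "t \<in> {0..T}"
  shows "z t $ i > 0"
proof (rule ccontr)
  define Z where "Z = {0..T} \<inter> (\<Union>j. {s. z s $ j \<le> 0})"
  assume "\<not> z t $ i > 0"
  with t have "t \<in> Z" by (auto simp: Z_def not_less)
  then have "Z \<noteq> {}" by blast
  moreover have "bdd_below Z" by (auto simp: Z_def intro: bdd_belowI[of _ 0])
  moreover have "closed Z"
    unfolding Z_def
    by (intro closed_Int closed_UN closed_atLeastAtMost ballI closed_Collect_le continuous_on_const
        component_continuous_on_if_has_real_derivative[OF z']) simp
  ultimately have "Inf Z \<in> Z" by (rule closed_contains_Inf)
  then obtain j where t1: "Inf Z \<in> {0..T}" "z (Inf Z) $ j \<le> 0" by (auto simp: Z_def)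
  have "z s \<ge> 0" if s: "s \<in> {0<..<Inf Z}" for s
  proof -
    have "s \<notin> Z" using s cInf_lower[OF _ \<open>bdd_below Z\<close>, of s] by force
    with s t1 have "\<forall>j. z s $ j > 0" by (auto simp: Z_def not_le)
    then show ?thesis unfolding less_eq_vec_def by (auto intro: less_imp_le)
  qed
  then have "exp (\<mu> * 0) * z 0 $ j \<le> exp (\<mu> * Inf Z) * z (Inf Z) $ j"
    using t1 decrease by (intro exp_weighted_component_mono[OF assms(1) diag z']) auto
  moreover have "exp (\<mu> * Inf Z) * z (Inf Z) $ j \<le> 0"
    using t1(2) by (simp add: mult_nonneg_nonpos)
  ultimately show False using init[of j] by simp
qed

lemma decrease_imp_uniformly_positive:
  fixes A :: "real^'n^'n" and z z' :: "real \<Rightarrow> real^'n"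
  assumes "metzler A"
    and z': "\<And>t i. ((\<lambda>t. z t $ i) has_real_derivative z' t $ i) (at t)"
    and decrease: "\<And>t. t \<in> {0..T} \<Longrightarrow> z t v* A \<le> z' t"
    and init: "e *\<^sub>R 1 \<le> z 0" and "e > 0"
  obtains m where "m > 0" and "\<And>t. t \<in> {0..T} \<Longrightarrow> m *\<^sub>R 1 \<le> z t"
proof -
  define \<mu> where "\<mu> = (\<Sum>k\<in>UNIV. \<bar>A$k$k\<bar>)"
  have diag: "- \<mu> \<le> A$i$i" for i
    using member_le_sum[of i UNIV "\<lambda>k. \<bar>A$k$k\<bar>"] unfolding \<mu>_def by simp
  have "\<mu> \<ge> 0" unfolding \<mu>_def by (simp add: sum_nonneg)
  have init_i: "e \<le> z 0 $ i" for i
    using init unfolding less_eq_vec_def by simp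
  then have "z 0 $ i > 0" for i using \<open>e > 0\<close> less_le_trans by blast
  then have nonneg: "z t \<ge> 0" if "t \<in> {0..T}" for t
    unfolding less_eq_vec_def zero_index
    using decrease_imp_components_pos[OF assms(1) diag z' decrease _ that] by (auto intro: less_imp_le)
  have "e * exp (- \<mu> * T) \<le> z t $ i" if t: "t \<in> {0..T}" for t i
  proof -
    have "e \<le> exp (\<mu> * 0) * z 0 $ i" using init_i by simp
    also have "\<dots> \<le> exp (\<mu> * t) * z t $ i"
      using t by (intro exp_weighted_component_mono[OF assms(1) diag z'] decrease nonneg) auto
    finally have "e * exp (- \<mu> * t) \<le> z t $ i" by (simp add: exp_minus field_simps)
    moreover have "- \<mu> * T \<le> - \<mu> * t" using t \<open>\<mu> \<ge> 0\<close> by (simp add: mult_left_mono)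
    then have "e * exp (- \<mu> * T) \<le> e * exp (- \<mu> * t)" using \<open>e > 0\<close> by simp
    ultimately show ?thesis by linarith
  qed
  then show ?thesis
    using \<open>e > 0\<close> by (intro that[of "e * exp (- \<mu> * T)"]) (auto simp: less_eq_vec_def)
qed

lemma has_vector_derivative_component:
  fixes x :: "real \<Rightarrow> real^'n"
  assumes "(x has_vector_derivative v) (at s)"
  shows "((\<lambda>s. x s $ i) has_real_derivative v $ i) (at s)"
proof -
  have "((\<lambda>s. x s $ i) has_derivative (\<lambda>h. (h *\<^sub>R v) $ i)) (at s)"
    using bounded_linear.has_derivative[OF bounded_linear_vec_nth assms[unfolded has_vector_derivative_def]] .
  then show ?thesis unfolding has_field_derivative_def by (simp add: mult.commute[of _ "v$i"])
qed

lemma smoothed_abs_has_real_derivative: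
  fixes f :: "real \<Rightarrow> real"
  assumes "(f has_real_derivative f') (at s)" and "d > 0"
  shows "((\<lambda>s. sqrt ((f s)\<^sup>2 + d\<^sup>2)) has_real_derivative f s * f' / sqrt ((f s)\<^sup>2 + d\<^sup>2)) (at s)"
proof -
  have "(f s)\<^sup>2 + d\<^sup>2 > 0" using \<open>d > 0\<close> by (simp add: add_nonneg_pos)
  then show ?thesis
    by (auto intro!: derivative_eq_intros assms(1) simp: field_simps power2_eq_square)
qed

text \<open>Since \<open>\<bar>x\<^sub>i\<bar>\<close> is not differentiable, it is replaced by \<open>sqrt (x\<^sub>i\<^sup>2 + d\<^sup>2)\<close>; the
  diagonal term then costs an error \<open>d \<bar>A\<^sub>i\<^sub>i\<bar>\<close>, the off-diagonal ones only need \<open>A\<^sub>i\<^sub>j \<ge> 0\<close>.\<close>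
lemma metzler_smoothed_abs_ineq:
  fixes A :: "real^'n^'n" and x :: "real^'n"
  assumes "metzler A" and "d > 0"
  shows "x$i * (A *v x)$i / sqrt ((x$i)\<^sup>2 + d\<^sup>2)
    \<le> (\<Sum>j\<in>UNIV. A$i$j * sqrt ((x$j)\<^sup>2 + d\<^sup>2)) + d * \<bar>A$i$i\<bar>"
proof -
  define r where "r j = sqrt ((x$j)\<^sup>2 + d\<^sup>2)" for j
  have r_pos: "r j > 0" for j
    unfolding r_def using \<open>d > 0\<close> by (simp add: add_nonneg_pos)
  have abs_le_r: "\<bar>x$j\<bar> \<le> r j" for j
    unfolding r_def by (rule real_le_rsqrt) simp
  have r_sq: "r j * r j = (x$j)\<^sup>2 + d\<^sup>2" for j
    unfolding r_def by simp
  have d_le_r: "d \<le> r j" for j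
    unfolding r_def using \<open>d > 0\<close> by (intro real_le_rsqrt) simp
  have offdiag: "A$i$j * (x$i * x$j / r i) \<le> A$i$j * r j" if "j \<noteq> i" for j
  proof -
    have "x$i * x$j / r i \<le> \<bar>x$i * x$j\<bar> / r i"
      using less_imp_le[OF r_pos[of i]] by (intro divide_right_mono abs_ge_self)
    also have "\<dots> = \<bar>x$i\<bar> * \<bar>x$j\<bar> / r i" by (simp add: abs_mult)
    also have "\<dots> \<le> r i * \<bar>x$j\<bar> / r i"
      using abs_le_r less_imp_le[OF r_pos] by (intro divide_right_mono mult_right_mono) auto
    also have "\<dots> \<le> r j" using r_pos[of i] abs_le_r[of j] by simp
    finally show ?thesis
      using \<open>metzler A\<close> that by (intro mult_left_mono) (auto simp: metzler_def)
  qed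
  have diag: "A$i$i * (x$i * x$i / r i) \<le> A$i$i * r i + d * \<bar>A$i$i\<bar>"
  proof -
    have "x$i * x$i / r i = r i - d * (d / r i)"
      using r_pos[of i] r_sq[of i] by (simp add: field_simps power2_eq_square)
    moreover have "\<bar>A$i$i * (d * (d / r i))\<bar> \<le> d * \<bar>A$i$i\<bar>"
    proof -
      have "d / r i \<le> 1" using d_le_r[of i] r_pos[of i] by simp
      then have "d * (d / r i) \<le> d" using mult_left_le[of "d / r i" d] \<open>d > 0\<close> by simp
      have "\<bar>A$i$i * (d * (d / r i))\<bar> = \<bar>A$i$i\<bar> * (d * (d / r i))"
        using r_pos[of i] \<open>d > 0\<close> by (simp add: abs_mult)
      also have "\<dots> \<le> \<bar>A$i$i\<bar> * d"
        using \<open>d * (d / r i) \<le> d\<close> by (rule mult_left_mono) simp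
      finally show ?thesis by (simp add: mult.commute)
    qed
    ultimately show ?thesis
      using abs_ge_minus_self[of "A$i$i * (d * (d / r i))"] by (simp only: right_diff_distrib)
  qed
  have "x$i * (A *v x)$i / r i = (\<Sum>j\<in>UNIV. A$i$j * (x$i * x$j / r i))"
    by (simp add: matrix_vector_mult_def sum_distrib_left sum_divide_distrib algebra_simps)
  also have "\<dots> \<le> (\<Sum>j\<in>UNIV. A$i$j * r j + (if j = i then d * \<bar>A$i$i\<bar> else 0))"
    using offdiag diag by (intro sum_mono) auto
  also have "\<dots> = (\<Sum>j\<in>UNIV. A$i$j * r j) + d * \<bar>A$i$i\<bar>"
    by (simp add: sum.distrib)
  finally show ?thesis by (simp add: r_def)
qed

lemma copositive_smoothed_derivative_le:
  fixes A :: "real^'n^'n" and w w' x :: "real^'n"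
  assumes metz: "metzler A" and d: "d > 0" and "w \<ge> 0" and lyap: "w v* A + w' \<le> 0"
  shows "(\<Sum>i\<in>UNIV. w$i * (x$i * (A *v x)$i / sqrt ((x$i)\<^sup>2 + d\<^sup>2)) + w'$i * sqrt ((x$i)\<^sup>2 + d\<^sup>2))
    \<le> d * (\<Sum>i\<in>UNIV. w$i * \<bar>A$i$i\<bar>)"
proof -
  define r where "r i = sqrt ((x$i)\<^sup>2 + d\<^sup>2)" for i
  have swap: "(\<Sum>i\<in>UNIV. w$i * (\<Sum>j\<in>UNIV. A$i$j * r j)) = (\<Sum>j\<in>UNIV. r j * (w v* A) $ j)"
  proof -
    have "(\<Sum>i\<in>UNIV. w$i * (\<Sum>j\<in>UNIV. A$i$j * r j)) = (\<Sum>i\<in>UNIV. \<Sum>j\<in>UNIV. w$i * A$i$j * r j)"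
      by (simp add: sum_distrib_left mult.assoc)
    also have "\<dots> = (\<Sum>j\<in>UNIV. \<Sum>i\<in>UNIV. w$i * A$i$j * r j)"
      by (rule sum.swap)
    also have "\<dots> = (\<Sum>j\<in>UNIV. r j * (w v* A) $ j)"
      by (simp add: vector_matrix_mult_def sum_distrib_left mult_ac)
    finally show ?thesis .
  qed
  have "(\<Sum>i\<in>UNIV. w$i * (x$i * (A *v x)$i / r i) + w'$i * r i)
      \<le> (\<Sum>i\<in>UNIV. w$i * ((\<Sum>j\<in>UNIV. A$i$j * r j) + d * \<bar>A$i$i\<bar>) + w'$i * r i)"
    unfolding r_def using \<open>w \<ge> 0\<close>
    by (intro sum_mono add_right_mono mult_left_mono metzler_smoothed_abs_ineq[OF metz d])
      (simp add: less_eq_vec_def)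
  also have "\<dots> = (\<Sum>i\<in>UNIV. w$i * (\<Sum>j\<in>UNIV. A$i$j * r j))
      + (\<Sum>j\<in>UNIV. r j * w'$j) + d * (\<Sum>i\<in>UNIV. w$i * \<bar>A$i$i\<bar>)"
    by (simp add: sum.distrib distrib_left sum_distrib_left mult_ac)
  also have "\<dots> = (\<Sum>j\<in>UNIV. r j * ((w v* A) $ j + w'$j)) + d * (\<Sum>i\<in>UNIV. w$i * \<bar>A$i$i\<bar>)"
    unfolding swap by (simp add: sum.distrib distrib_left)
  also have "\<dots> \<le> d * (\<Sum>i\<in>UNIV. w$i * \<bar>A$i$i\<bar>)"
    using lyap by (simp add: sum_nonpos mult_nonneg_nonpos r_def less_eq_vec_def)
  finally show ?thesis by (simp add: r_def)
qed

lemma copositive_smoothed_weighted_abs_bound: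
  fixes A :: "real^'n^'n" and w w' x :: "real \<Rightarrow> real^'n"
  assumes metz: "metzler A" and d: "d > 0"
    and w': "\<And>s i. ((\<lambda>s. w s $ i) has_real_derivative w' s $ i) (at s)"
    and w_nonneg: "\<And>s. s \<in> {s1..s2} \<Longrightarrow> w s \<ge> 0"
    and lyap: "\<And>s. s \<in> {s1..s2} \<Longrightarrow> w s v* A + w' s \<le> 0"
    and x': "\<And>s. s \<in> {s1..s2} \<Longrightarrow> (x has_vector_derivative A *v x s) (at s)"
    and B: "\<And>s. s \<in> {s1..s2} \<Longrightarrow> (\<Sum>i\<in>UNIV. w s $ i * (1 + \<bar>A$i$i\<bar>)) \<le> B"
    and "s1 \<le> s2"
  shows "w s2 \<bullet> \<bar>x s2\<bar> \<le> w s1 \<bullet> \<bar>x s1\<bar> + d * B * (1 + (s2 - s1))"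
proof -
  define r where "r i s = sqrt ((x s $ i)\<^sup>2 + d\<^sup>2)" for i s
  define Gd where "Gd s = (\<Sum>i\<in>UNIV. w s $ i * r i s)" for s
  define Dd where "Dd s = (\<Sum>i\<in>UNIV. w s $ i * (x s $ i * (A *v x s) $ i / r i s) + w' s $ i * r i s)"
    for s
  have "Gd s2 - d * B * s2 \<le> Gd s1 - d * B * s1"
  proof (rule DERIV_nonpos_imp_nonincreasing[OF \<open>s1 \<le> s2\<close>])
    fix s assume "s1 \<le> s" "s \<le> s2"
    then have s: "s \<in> {s1..s2}" by simp
    have "(Gd has_real_derivative Dd s) (at s)"
      unfolding Gd_def Dd_def r_def
      by (intro DERIV_sum DERIV_mult' w' smoothed_abs_has_real_derivative d
          has_vector_derivative_component x' s)
    then have "((\<lambda>s. Gd s - d * B * s) has_real_derivative Dd s - d * B) (at s)"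
      by (auto intro!: derivative_eq_intros)
    moreover have "Dd s \<le> d * (\<Sum>i\<in>UNIV. w s $ i * \<bar>A$i$i\<bar>)"
      unfolding Dd_def r_def by (rule copositive_smoothed_derivative_le[OF metz d w_nonneg[OF s] lyap[OF s]])
    moreover have "(\<Sum>i\<in>UNIV. w s $ i * \<bar>A$i$i\<bar>) \<le> (\<Sum>i\<in>UNIV. w s $ i * (1 + \<bar>A$i$i\<bar>))"
      using w_nonneg[OF s] by (intro sum_mono) (auto simp: less_eq_vec_def distrib_left)
    then have "d * (\<Sum>i\<in>UNIV. w s $ i * \<bar>A$i$i\<bar>) \<le> d * B"
      using B[OF s] d by (intro mult_left_mono) auto
    ultimately show "\<exists>y. ((\<lambda>s. Gd s - d * B * s) has_real_derivative y) (at s) \<and> y \<le> 0"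
      by (intro exI[of _ "Dd s - d * B"]) auto
  qed
  moreover have "w s2 \<bullet> \<bar>x s2\<bar> \<le> Gd s2"
    unfolding inner_abs_cart Gd_def r_def using w_nonneg[of s2] \<open>s1 \<le> s2\<close>
    by (intro sum_mono mult_left_mono real_le_rsqrt) (auto simp: less_eq_vec_def)
  moreover have "Gd s1 \<le> w s1 \<bullet> \<bar>x s1\<bar> + d * B"
  proof -
    have "Gd s1 \<le> (\<Sum>i\<in>UNIV. w s1 $ i * (\<bar>x s1 $ i\<bar> + d))"
      unfolding Gd_def r_def using w_nonneg[of s1] \<open>s1 \<le> s2\<close> d
      by (intro sum_mono mult_left_mono real_le_lsqrt)
        (auto simp: less_eq_vec_def power2_eq_square algebra_simps)
    also have "\<dots> = w s1 \<bullet> \<bar>x s1\<bar> + d * (\<Sum>i\<in>UNIV. w s1 $ i)"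
      by (simp add: inner_abs_cart algebra_simps sum.distrib sum_distrib_left)
    also have "\<dots> \<le> w s1 \<bullet> \<bar>x s1\<bar> + d * B"
    proof -
      have "(\<Sum>i\<in>UNIV. w s1 $ i) \<le> (\<Sum>i\<in>UNIV. w s1 $ i * (1 + \<bar>A$i$i\<bar>))"
        using w_nonneg[of s1] \<open>s1 \<le> s2\<close>
        by (intro sum_mono) (auto simp: less_eq_vec_def distrib_left)
      with B[of s1] \<open>s1 \<le> s2\<close> d show ?thesis by simp
    qed
    finally show ?thesis .
  qed
  ultimately show ?thesis by (simp add: algebra_simps)
qed

lemma copositive_weighted_abs_antimono:
  fixes A :: "real^'n^'n" and w w' x :: "real \<Rightarrow> real^'n"
  assumes metz: "metzler A"
    and w': "\<And>s i. ((\<lambda>s. w s $ i) has_real_derivative w' s $ i) (at s)"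
    and w_nonneg: "\<And>s. s \<in> {s1..s2} \<Longrightarrow> w s \<ge> 0"
    and lyap: "\<And>s. s \<in> {s1..s2} \<Longrightarrow> w s v* A + w' s \<le> 0"
    and x': "\<And>s. s \<in> {s1..s2} \<Longrightarrow> (x has_vector_derivative A *v x s) (at s)"
    and "s1 \<le> s2"
  shows "w s2 \<bullet> \<bar>x s2\<bar> \<le> w s1 \<bullet> \<bar>x s1\<bar>"
proof -
  have "bdd_above ((\<lambda>s. \<Sum>i\<in>UNIV. w s $ i * (1 + \<bar>A$i$i\<bar>)) ` {s1..s2})"
    by (intro bounded_imp_bdd_above compact_imp_bounded compact_continuous_image compact_Icc
        continuous_on_sum continuous_on_mult_right component_continuous_on_if_has_real_derivative[OF w'])
  then obtain B where B: "\<And>s. s \<in> {s1..s2} \<Longrightarrow> (\<Sum>i\<in>UNIV. w s $ i * (1 + \<bar>A$i$i\<bar>)) \<le> B"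
    unfolding bdd_above_def by (meson imageI)
  define C where "C = B * (1 + (s2 - s1))"
  have "((\<lambda>d. w s1 \<bullet> \<bar>x s1\<bar> + d * C) \<longlongrightarrow> w s1 \<bullet> \<bar>x s1\<bar> + 0 * C) (at_right 0)"
    by (intro tendsto_intros)
  moreover have "\<forall>\<^sub>F d in at_right 0. w s2 \<bullet> \<bar>x s2\<bar> \<le> w s1 \<bullet> \<bar>x s1\<bar> + d * C"
    using eventually_at_right_less[of 0]
  proof eventually_elim
    case (elim d)
    show ?case
      using copositive_smoothed_weighted_abs_bound[OF metz elim w' w_nonneg lyap x' B \<open>s1 \<le> s2\<close>]
      by (simp add: C_def mult.assoc)
  qed
  ultimately show ?thesis
    by (intro tendsto_le[OF trivial_limit_at_right_real _ tendsto_const]) simp_all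
qed

lemma copositive_weighted_abs_le_right_limit:
  fixes A :: "real^'n^'n" and w w' x :: "real \<Rightarrow> real^'n"
  assumes metz: "metzler A"
    and w': "\<And>s i. ((\<lambda>s. w s $ i) has_real_derivative w' s $ i) (at s)"
    and w_nonneg: "\<And>s. s \<in> {a<..<b} \<Longrightarrow> w s \<ge> 0"
    and lyap: "\<And>s. s \<in> {a<..<b} \<Longrightarrow> w s v* A + w' s \<le> 0"
    and x': "\<And>s. s \<in> {a<..<b} \<Longrightarrow> (x has_vector_derivative A *v x s) (at s)"
    and x_cont: "continuous_on {a<..b} x"
    and x_lim: "(x \<longlongrightarrow> y) (at_right a)"
    and s: "s \<in> {a<..b}"
  shows "w s \<bullet> \<bar>x s\<bar> \<le> w a \<bullet> \<bar>y\<bar>"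
proof -
  define G where "G s = w s \<bullet> \<bar>x s\<bar>" for s
  have w_lim: "((\<lambda>s. w s $ i) \<longlongrightarrow> w c $ i) (at c within S)" for c S i
    using continuous_at_imp_continuous_at_within[OF DERIV_isCont[OF w']]
    by (simp add: continuous_within)
  have G_antimono: "G s2 \<le> G s1" if "a < s1" "s1 \<le> s2" "s2 < b" for s1 s2
    unfolding G_def
    by (rule copositive_weighted_abs_antimono[OF metz w']) (use that in \<open>auto intro: w_nonneg lyap x'\<close>)
  have G_lim: "(G \<longlongrightarrow> w a \<bullet> \<bar>y\<bar>) (at_right a)"
    unfolding G_def inner_abs_cart by (intro tendsto_sum tendsto_mult w_lim tendsto_rabs tendsto_vec_nth x_lim)
  have G_le: "G s \<le> w a \<bullet> \<bar>y\<bar>" if s: "s \<in> {a<..<b}" for s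
  proof (rule tendsto_le[OF trivial_limit_at_right_real G_lim tendsto_const])
    have "\<forall>\<^sub>F s1 in at_right a. s1 \<in> {a<..<s}"
      using s by (intro eventually_at_right_real) simp
    then show "\<forall>\<^sub>F s1 in at_right a. G s \<le> G s1"
    proof eventually_elim
      case (elim s1)
      with s show ?case by (intro G_antimono) auto
    qed
  qed
  show ?thesis
  proof (cases "s < b")
    case True
    with s G_le show ?thesis by (simp add: G_def)
  next
    case False
    with s have "s = b" "a < b" by auto
    have "continuous_on {(a + b) / 2..b} x"
      using \<open>a < b\<close> by (intro continuous_on_subset[OF x_cont]) auto
    then have "(x \<longlongrightarrow> x b) (at b within {(a + b) / 2..b})"
      using \<open>a < b\<close> by (simp add: continuous_on_def)
    then have "(x \<longlongrightarrow> x b) (at_left b)"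
      using \<open>a < b\<close> by (simp add: at_within_Icc_at_left)
    then have "(G \<longlongrightarrow> G b) (at_left b)"
      unfolding G_def inner_abs_cart
      by (intro tendsto_sum tendsto_mult w_lim tendsto_rabs tendsto_vec_nth)
    moreover have "\<forall>\<^sub>F s in at_left b. G s \<le> w a \<bullet> \<bar>y\<bar>"
      using eventually_at_left_real[OF \<open>a < b\<close>] by eventually_elim (rule G_le)
    ultimately have "G b \<le> w a \<bullet> \<bar>y\<bar>"
      by (rule tendsto_le[OF trivial_limit_at_left_real tendsto_const])
    with \<open>s = b\<close> show ?thesis by (simp add: G_def)
  qed
qed

lemma nonneg_mat_inner_abs_le:
  fixes J :: "real^'n^'n"
  assumes "nonneg_mat J" and "v \<ge> 0"
  shows "v \<bullet> \<bar>J *v y\<bar> \<le> (v v* J) \<bullet> \<bar>y\<bar>"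
proof -
  have "\<bar>(J *v y) $ i\<bar> \<le> (\<Sum>j\<in>UNIV. J$i$j * \<bar>y$j\<bar>)" for i
  proof -
    have "\<bar>(J *v y) $ i\<bar> \<le> (\<Sum>j\<in>UNIV. \<bar>J$i$j * y$j\<bar>)"
      unfolding matrix_vector_mult_def by (simp add: sum_abs)
    also have "\<dots> = (\<Sum>j\<in>UNIV. J$i$j * \<bar>y$j\<bar>)"
      using \<open>nonneg_mat J\<close> by (simp add: abs_mult nonneg_mat_def)
    finally show ?thesis .
  qed
  then have "v \<bullet> \<bar>J *v y\<bar> \<le> (\<Sum>i\<in>UNIV. v$i * (\<Sum>j\<in>UNIV. J$i$j * \<bar>y$j\<bar>))"
    unfolding inner_abs_cart using \<open>v \<ge> 0\<close>
    by (intro sum_mono mult_left_mono) (auto simp: less_eq_vec_def)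
  also have "\<dots> = (\<Sum>j\<in>UNIV. \<Sum>i\<in>UNIV. v$i * J$i$j * \<bar>y$j\<bar>)"
    unfolding sum_distrib_left mult.assoc by (rule sum.swap)
  also have "\<dots> = (v v* J) \<bullet> \<bar>y\<bar>"
    by (simp add: inner_abs_cart vector_matrix_mult_def sum_distrib_right)
  finally show ?thesis .
qed

lemma inner_abs_mono:
  fixes u v :: "real^'n"
  assumes "v \<le> u"
  shows "v \<bullet> \<bar>y\<bar> \<le> u \<bullet> \<bar>y\<bar>"
  unfolding inner_abs_cart using assms by (intro sum_mono mult_right_mono) (auto simp: less_eq_vec_def)

lemma inner_abs_le_sum_norm:
  fixes u :: "real^'n"
  assumes "u \<ge> 0"
  shows "u \<bullet> \<bar>y\<bar> \<le> (\<Sum>i\<in>UNIV. u$i) * norm y"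
  unfolding inner_abs_cart sum_distrib_right using assms
  by (intro sum_mono mult_left_mono component_le_norm_cart) (auto simp: less_eq_vec_def)

lemma exists_contraction_factor:
  fixes u v :: "real^'n"
  assumes "0 \<le> v" and "v + e *\<^sub>R 1 \<le> u" and "e > 0"
  shows "\<exists>q\<ge>0. q < 1 \<and> v \<le> q *\<^sub>R u"
proof -
  define S where "S = (\<Sum>i\<in>UNIV. u$i)"
  have e_le_u: "e \<le> u$i" for i
    using assms(1,2) by (auto simp: less_eq_vec_def intro: order_trans[rotated])
  have u_le_S: "u$i \<le> S" for i
    unfolding S_def using e_le_u \<open>e > 0\<close>
    by (intro member_le_sum) (auto intro: order_trans[OF less_imp_le])
  have "S > 0" using e_le_u[of undefined] u_le_S[of undefined] \<open>e > 0\<close> by linarith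
  have "v \<le> (1 - e / S) *\<^sub>R u"
  proof -
    have "v$i \<le> (1 - e / S) * u$i" for i
    proof -
      have "e * u$i / S \<le> e"
        using u_le_S[of i] \<open>S > 0\<close> \<open>e > 0\<close> by (simp add: divide_le_eq mult_left_mono)
      moreover have "v$i + e \<le> u$i" using assms(2) by (simp add: less_eq_vec_def)
      ultimately show ?thesis by (simp add: algebra_simps)
    qed
    then show ?thesis by (simp add: less_eq_vec_def)
  qed
  moreover have "0 \<le> 1 - e / S"
    using e_le_u[of undefined] u_le_S[of undefined] \<open>S > 0\<close> by simp
  moreover have "1 - e / S < 1" using \<open>S > 0\<close> \<open>e > 0\<close> by simp
  ultimately show ?thesis by blast
qed

lemma const_dwell_times:
  assumes "\<forall>k. tk (Suc k) - tk k = (T::real)"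
  shows "tk k = tk 0 + real k * T"
  by (induction k) (use assms in \<open>auto simp: algebra_simps\<close>)

lemma const_dwell_interval_cover:
  assumes dwell: "\<forall>k. tk (Suc k) - tk k = (T::real)" and "T > 0" and "tk 0 < s"
  obtains k where "s \<in> {tk k<..tk (Suc k)}"
proof -
  obtain n where "s - tk 0 < real n * T" using ex_less_of_nat_mult[OF \<open>T > 0\<close>] by blast
  then have "s \<le> tk n" using const_dwell_times[OF dwell, of n] by simp
  moreover have "\<not> s \<le> tk 0" using \<open>tk 0 < s\<close> by simp
  ultimately obtain k where "\<not> s \<le> tk k" "s \<le> tk (Suc k)"
    using ex_least_nat_less[of "\<lambda>i. s \<le> tk i" n] by auto
  then show ?thesis by (intro that[of k]) (simp add: not_le)
qed

lemma impulsive_solution_next_time: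
  assumes "impulsive_solution A J Tbar tk x"
  shows "tk (Suc k) = tk k + Tbar"
  using assms unfolding impulsive_solution_def by (metis add.commute diff_add_cancel)

lemma scaleR_one_le_imp_nonneg:
  fixes z :: "real^'n"
  assumes "m *\<^sub>R 1 \<le> z" and "m > 0"
  shows "z \<ge> 0"
  using assms by (auto simp: less_eq_vec_def intro: order.trans[rotated])

lemma nonneg_mat_vector_matrix_mult_nonneg:
  fixes J :: "real^'n^'n"
  assumes "nonneg_mat J" and "v \<ge> 0"
  shows "v v* J \<ge> 0"
  using assms by (auto simp: less_eq_vec_def vector_matrix_mult_def nonneg_mat_def intro!: sum_nonneg)

text \<open>On \<open>(t\<^sub>k, t\<^sub>k\<^sub>+\<^sub>1]\<close> the certificate is run backwards, \<open>w(s) = z(T - (s - t\<^sub>k))\<close>: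
  it starts from \<open>z T\<close>, which meets the jump \<open>J\<close>, and ends at \<open>z 0\<close> at the next impulse.\<close>
lemma impulsive_solution_interval_bound:
  fixes A J :: "real^'n^'n" and z z' x :: "real \<Rightarrow> real^'n"
  assumes metz: "metzler A" and J: "nonneg_mat J"
    and z': "\<And>t i. ((\<lambda>t. z t $ i) has_real_derivative z' t $ i) (at t)"
    and z_nonneg: "\<And>t. t \<in> {0..Tbar} \<Longrightarrow> z t \<ge> 0"
    and decrease: "\<And>t. t \<in> {0..Tbar} \<Longrightarrow> z t v* A \<le> z' t"
    and jump: "z Tbar v* J \<le> q *\<^sub>R z 0"
    and sol: "impulsive_solution A J Tbar tk x"
    and s: "s \<in> {tk k<..tk (Suc k)}"
  shows "z (Tbar - (s - tk k)) \<bullet> \<bar>x s\<bar> \<le> q * (z 0 \<bullet> \<bar>x (tk k)\<bar>)"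
proof -
  note next_time = impulsive_solution_next_time[OF sol, of k]
  define w where "w s = z (Tbar - (s - tk k))" for s
  define w' where "w' s = - z' (Tbar - (s - tk k))" for s
  have w': "((\<lambda>s. w s $ i) has_real_derivative w' s $ i) (at s)" for s i
  proof -
    have "((\<lambda>s. Tbar - (s - tk k)) has_real_derivative -1) (at s)"
      by (auto intro!: derivative_eq_intros)
    from DERIV_chain2[OF z' this] show ?thesis by (simp add: w_def w'_def)
  qed
  have reversed_time: "Tbar - (s - tk k) \<in> {0..Tbar}" if "s \<in> {tk k<..<tk (Suc k)}" for s
    using that next_time by auto
  have "w s \<bullet> \<bar>x s\<bar> \<le> w (tk k) \<bullet> \<bar>J *v x (tk k)\<bar>"
  proof (rule copositive_weighted_abs_le_right_limit[OF metz w'])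
    fix s assume s: "s \<in> {tk k<..<tk (Suc k)}"
    note t = reversed_time[OF s]
    show "w s \<ge> 0" using z_nonneg[OF t] by (simp add: w_def)
    show "w s v* A + w' s \<le> 0" using decrease[OF t] by (simp add: w_def w'_def less_eq_vec_def)
    show "(x has_vector_derivative A *v x s) (at s)"
      using sol s by (simp add: impulsive_solution_def)
  next
    show "continuous_on {tk k<..tk (Suc k)} x" "(x \<longlongrightarrow> J *v x (tk k)) (at_right (tk k))"
      using sol by (simp_all add: impulsive_solution_def)
  qed (rule s)
  also have "\<dots> \<le> (z Tbar v* J) \<bullet> \<bar>x (tk k)\<bar>"
  proof -
    have "Tbar \<in> {0..Tbar}" using s next_time by simp
    from nonneg_mat_inner_abs_le[OF J z_nonneg[OF this]] show ?thesis by (simp add: w_def)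
  qed
  also have "\<dots> \<le> (q *\<^sub>R z 0) \<bullet> \<bar>x (tk k)\<bar>"
    using jump by (rule inner_abs_mono)
  finally show ?thesis by (simp add: w_def)
qed

lemma impulsive_solution_geometric_bound:
  fixes A J :: "real^'n^'n" and z z' x :: "real \<Rightarrow> real^'n"
  assumes metz: "metzler A" and J: "nonneg_mat J" and "Tbar > 0"
    and z': "\<And>t i. ((\<lambda>t. z t $ i) has_real_derivative z' t $ i) (at t)"
    and lower: "\<And>t. t \<in> {0..Tbar} \<Longrightarrow> m *\<^sub>R 1 \<le> z t" and "m > 0"
    and decrease: "\<And>t. t \<in> {0..Tbar} \<Longrightarrow> z t v* A \<le> z' t"
    and jump: "z Tbar v* J \<le> q *\<^sub>R z 0" and "0 \<le> q" "q \<le> 1"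
    and sol: "impulsive_solution A J Tbar tk x"
    and s: "s \<in> {tk k<..tk (Suc k)}"
  shows "norm (x s) \<le> ((\<Sum>i\<in>UNIV. z 0 $ i) / m) * q ^ k * norm (x (tk 0))"
proof -
  define V where "V y = z 0 \<bullet> \<bar>y\<bar>" for y
  have z_nonneg: "z t \<ge> 0" if "t \<in> {0..Tbar}" for t
    using lower[OF that] \<open>m > 0\<close> by (rule scaleR_one_le_imp_nonneg)
  have interval: "z (Tbar - (r - tk j)) \<bullet> \<bar>x r\<bar> \<le> q * V (x (tk j))"
    if "r \<in> {tk j<..tk (Suc j)}" for r j
    unfolding V_def by (rule impulsive_solution_interval_bound[OF metz J z' z_nonneg decrease jump sol that])
  have V_nonneg: "V y \<ge> 0" for y
    unfolding V_def inner_abs_cart using z_nonneg[of 0] \<open>Tbar > 0\<close>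
    by (intro sum_nonneg mult_nonneg_nonneg) (auto simp: less_eq_vec_def)
  note next_time = impulsive_solution_next_time[OF sol]
  have "V (x (tk (Suc j))) \<le> q * V (x (tk j))" for j
    using interval[of "tk (Suc j)" j] next_time[of j] \<open>Tbar > 0\<close> by (simp add: V_def)
  then have geometric: "V (x (tk j)) \<le> q ^ j * V (x (tk 0))" for j
  proof (induction j)
    case (Suc j)
    have "V (x (tk (Suc j))) \<le> q * V (x (tk j))" by (rule Suc.prems)
    also have "\<dots> \<le> q * (q ^ j * V (x (tk 0)))"
      using Suc \<open>0 \<le> q\<close> by (intro mult_left_mono) auto
    finally show ?case by simp
  qed simp
  have t: "Tbar - (s - tk k) \<in> {0..Tbar}" using s next_time[of k] by auto
  have "m * norm (x s) \<le> (m *\<^sub>R 1) \<bullet> \<bar>x s\<bar>"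
    using mult_left_mono[OF norm_le_l1_cart[of "x s"], of m] \<open>m > 0\<close>
    by (simp add: inner_abs_cart sum_distrib_left)
  also have "\<dots> \<le> z (Tbar - (s - tk k)) \<bullet> \<bar>x s\<bar>"
    by (rule inner_abs_mono[OF lower[OF t]])
  also have "\<dots> \<le> q * V (x (tk k))"
    by (rule interval[OF s])
  also have "\<dots> \<le> V (x (tk k))"
    using V_nonneg \<open>0 \<le> q\<close> \<open>q \<le> 1\<close> by (rule mult_left_le_one_le)
  also have "\<dots> \<le> q ^ k * V (x (tk 0))" by (rule geometric)
  also have "\<dots> \<le> q ^ k * ((\<Sum>i\<in>UNIV. z 0 $ i) * norm (x (tk 0)))"
    unfolding V_def using z_nonneg[of 0] \<open>Tbar > 0\<close> \<open>0 \<le> q\<close>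
    by (intro mult_left_mono inner_abs_le_sum_norm) auto
  finally show ?thesis
    using \<open>m > 0\<close> by (simp add: field_simps)
qed

lemma geometric_bound_imp_uniform_bound:
  assumes dwell: "\<forall>k. tk (Suc k) - tk k = (Tbar::real)" and "Tbar > 0"
    and "0 \<le> q" "q \<le> 1" "0 \<le> K"
    and bound: "\<And>k s. s \<in> {tk k<..tk (Suc k)} \<Longrightarrow> norm (x s) \<le> K * q ^ k * norm (x (tk 0))"
    and "tk 0 \<le> s"
  shows "norm (x s) \<le> (K + 1) * norm (x (tk 0))"
proof (cases "s = tk 0")
  case True
  then show ?thesis using \<open>0 \<le> K\<close> by (simp add: distrib_right)
next
  case False
  with \<open>tk 0 \<le> s\<close> have "tk 0 < s" by simp
  then obtain k where k: "s \<in> {tk k<..tk (Suc k)}"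
    by (rule const_dwell_interval_cover[OF dwell \<open>Tbar > 0\<close>])
  have "K * q ^ k * norm (x (tk 0)) \<le> (K + 1) * 1 * norm (x (tk 0))"
    using assms(3-5) by (intro mult_right_mono mult_mono power_le_one) auto
  with bound[OF k] show ?thesis by simp
qed

lemma geometric_bound_imp_tendsto_zero:
  fixes x :: "real \<Rightarrow> 'a::real_normed_vector"
  assumes dwell: "\<forall>k. tk (Suc k) - tk k = (Tbar::real)" and "Tbar > 0" and "0 \<le> q" "q < 1"
    and bound: "\<And>k s. s \<in> {tk k<..tk (Suc k)} \<Longrightarrow> norm (x s) \<le> K * q ^ k * norm (x (tk 0))"
  shows "(x \<longlongrightarrow> 0) at_top"
proof (rule tendsto_norm_zero_cancel, rule tendstoI)
  fix e :: real assume "e > 0"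
  have "(\<lambda>k. K * q ^ k * norm (x (tk 0))) \<longlonglongrightarrow> K * 0 * norm (x (tk 0))"
    using assms(3,4) by (intro tendsto_intros LIMSEQ_power_zero) auto
  then have "\<forall>\<^sub>F k in sequentially. K * q ^ k * norm (x (tk 0)) < e"
    using \<open>e > 0\<close> by (simp add: order_tendstoD(2))
  then obtain k0 where k0: "\<And>k. k \<ge> k0 \<Longrightarrow> K * q ^ k * norm (x (tk 0)) < e"
    unfolding eventually_sequentially by blast
  have late: "dist (norm (x s)) 0 < e" if "s > tk k0" for s
  proof -
    have "0 \<le> real k0 * Tbar" using \<open>Tbar > 0\<close> by simp
    then have "tk 0 < s" using that const_dwell_times[OF dwell, of k0] by simp
    then obtain k where k: "s \<in> {tk k<..tk (Suc k)}"
      by (rule const_dwell_interval_cover[OF dwell \<open>Tbar > 0\<close>])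
    then have "real k0 * Tbar < real (Suc k) * Tbar"
      using that const_dwell_times[OF dwell, of k0] const_dwell_times[OF dwell, of "Suc k"] by simp
    then have "k0 \<le> k" using \<open>Tbar > 0\<close> by (simp add: mult_less_cancel_right)
    with bound[OF k] k0[of k] show ?thesis by simp
  qed
  show "\<forall>\<^sub>F s in at_top. dist (norm (x s)) 0 < e"
    using eventually_gt_at_top[of "tk k0"] by (rule eventually_mono) (rule late)
qed

lemma GAS_const_dwell_if_geometric_bound:
  fixes A J :: "real^'n^'n"
  assumes "Tbar > 0" and "0 \<le> q" "q < 1" and "0 \<le> K"
    and bound: "\<And>tk x k s. impulsive_solution A J Tbar tk x \<Longrightarrow> s \<in> {tk k<..tk (Suc k)} \<Longrightarrow>
      norm (x s) \<le> K * q ^ k * norm (x (tk 0))"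
  shows "GAS_const_dwell A J Tbar"
  unfolding GAS_const_dwell_def
proof (intro conjI allI impI)
  fix e :: real assume "e > 0"
  show "\<exists>\<delta>>0. \<forall>tk x. impulsive_solution A J Tbar tk x \<longrightarrow> norm (x (tk 0)) < \<delta> \<longrightarrow>
      (\<forall>s\<ge>tk 0. norm (x s) < e)"
  proof (intro exI[of _ "e / (K + 1)"] conjI allI impI)
    show "e / (K + 1) > 0" using \<open>e > 0\<close> \<open>0 \<le> K\<close> by simp
    fix tk x s assume sol: "impulsive_solution A J Tbar tk x" and "norm (x (tk 0)) < e / (K + 1)"
      and "tk 0 \<le> s"
    then have "(K + 1) * norm (x (tk 0)) < e" using \<open>0 \<le> K\<close> by (simp add: field_simps)
    moreover have "norm (x s) \<le> (K + 1) * norm (x (tk 0))"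
      using sol assms(1-4) \<open>tk 0 \<le> s\<close>
      by (intro geometric_bound_imp_uniform_bound[where q = q] bound)
        (auto simp: impulsive_solution_def)
    ultimately show "norm (x s) < e" by linarith
  qed
next
  fix tk and x :: "real \<Rightarrow> real^'n" assume "impulsive_solution A J Tbar tk x"
  then show "(x \<longlongrightarrow> 0) at_top"
    using assms(1-3)
    by (intro geometric_bound_imp_tendsto_zero[where q = q and K = K] bound)
      (auto simp: impulsive_solution_def)
qed

lemma GAS_const_dwell_if_copositive_certificate:
  fixes A J :: "real^'n^'n" and z z' :: "real \<Rightarrow> real^'n"
  assumes metz: "metzler A" and J: "nonneg_mat J" and "Tbar > 0"
    and z': "\<And>t i. ((\<lambda>t. z t $ i) has_real_derivative z' t $ i) (at t)"
    and lower: "\<And>t. t \<in> {0..Tbar} \<Longrightarrow> m *\<^sub>R 1 \<le> z t" and "m > 0"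
    and decrease: "\<And>t. t \<in> {0..Tbar} \<Longrightarrow> z t v* A \<le> z' t"
    and jump: "z Tbar v* J \<le> q *\<^sub>R z 0" and "0 \<le> q" "q < 1"
  shows "GAS_const_dwell A J Tbar"
proof (rule GAS_const_dwell_if_geometric_bound[OF \<open>Tbar > 0\<close> \<open>0 \<le> q\<close> \<open>q < 1\<close>])
  have "0 \<le> z 0" using lower[of 0] \<open>Tbar > 0\<close> \<open>m > 0\<close> by (simp add: scaleR_one_le_imp_nonneg)
  then show "0 \<le> (\<Sum>i\<in>UNIV. z 0 $ i) / m"
    using \<open>m > 0\<close> by (intro divide_nonneg_pos sum_nonneg) (auto simp: less_eq_vec_def)
  show "norm (x s) \<le> (\<Sum>i\<in>UNIV. z 0 $ i) / m * q ^ k * norm (x (tk 0))"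
    if "impulsive_solution A J Tbar tk x" "s \<in> {tk k<..tk (Suc k)}" for tk x k s
    by (rule impulsive_solution_geometric_bound[OF metz J \<open>Tbar > 0\<close> z' lower \<open>m > 0\<close> decrease jump
        \<open>0 \<le> q\<close> less_imp_le[OF \<open>q < 1\<close>] that])
qed

theorem proposition7:
  fixes A J :: "real^'n^'n" and Tbar eps1 eps2 :: real and dh :: nat
    and zeta :: "real poly ^ 'n" and theta :: "nat \<Rightarrow> nat \<Rightarrow> real^'n"
  assumes "metzler A" and "nonneg_mat J" and "Tbar > 0" and "eps1 > 0" and "eps2 > 0"
    and "\<forall>i. degree (zeta $ i) \<le> dh"
    and "\<forall>i j. i + j \<le> dh \<longrightarrow> theta i j \<ge> 0"
    and "pvec_eval zeta 0 - eps2 *\<^sub>R 1 \<ge> 0"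
    and "\<forall>k m. coeff (cond_poly A zeta theta dh Tbar $ k) m \<ge> 0"
    and "- (pvec_eval zeta Tbar v* J) + pvec_eval zeta 0 - eps1 *\<^sub>R 1 \<ge> 0"
  shows "(\<forall>\<tau>\<in>{0..Tbar}. pvec_eval zeta \<tau> v* A - pvec_eval (pvec_deriv zeta) \<tau> \<le> 0)
    \<and> pvec_eval zeta Tbar v* J - pvec_eval zeta 0 + eps1 *\<^sub>R 1 \<le> 0
    \<and> GAS_const_dwell A J Tbar"
proof -
  let ?z = "pvec_eval zeta" and ?z' = "pvec_eval (pvec_deriv zeta)"
  have decrease: "?z t v* A - ?z' t \<le> 0" if "t \<in> {0..Tbar}" for t
    by (rule cond_poly_coeffs_nonneg_imp_decrease[OF assms(7,9) that])
  obtain m where "m > 0" and lower: "\<And>t. t \<in> {0..Tbar} \<Longrightarrow> m *\<^sub>R 1 \<le> ?z t"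
  proof (rule decrease_imp_uniformly_positive[OF assms(1) pvec_eval_component_has_real_derivative _ _ assms(5)])
    show "?z t v* A \<le> ?z' t" if "t \<in> {0..Tbar}" for t using decrease[OF that] by simp
    show "eps2 *\<^sub>R 1 \<le> ?z 0" using assms(8) by simp
  qed (rule that)
  have "0 \<le> ?z Tbar" using lower[of Tbar] \<open>Tbar > 0\<close> \<open>m > 0\<close> by (simp add: scaleR_one_le_imp_nonneg)
  moreover have jump: "?z Tbar v* J + eps1 *\<^sub>R 1 \<le> ?z 0"
    using assms(10) by (simp add: algebra_simps)
  ultimately obtain q where "0 \<le> q" "q < 1" "?z Tbar v* J \<le> q *\<^sub>R ?z 0"
    using exists_contraction_factor assms(2,4) nonneg_mat_vector_matrix_mult_nonneg by blast
  then have "GAS_const_dwell A J Tbar"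
    using decrease \<open>m > 0\<close>
    by (intro GAS_const_dwell_if_copositive_certificate[OF assms(1-3)
        pvec_eval_component_has_real_derivative lower]) auto
  with decrease jump show ?thesis by (simp add: algebra_simps)
qed

end
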